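(* Let $a>b>0$, $c^2=a^2-b^2$, $\delta=\sqrt{a^4-a^2b^2+b^4}$, and let $E$ be the ellipse $\frac{x^2}{a^2}+\frac{y^2}{b^2}=1$. Let $C$ be the caustic of the 3-periodic billiard orbits of $E$, i.e. the ellipse $\frac{x^2}{a_c^2}+\frac{y^2}{b_c^2}=1$ with $a_c=\frac{a(\delta-b^2)}{c^2}$, $b_c=\frac{b(a^2-\delta)}{c^2}$. Let $A_b$ and $A_c$ be the areas enclosed by $E$ and $C$. Then for every 3-periodic billiard orbit in $E$, with inradius $r$ and circumradius $R$, \[ \frac{A_c}{A_b}=\frac{r}{2R}. \]
   Context: A 3-periodic billiard orbit in the ellipse $E$ is a nondegenerate triangle $P_1P_2P_3$ with all vertices on $E$ such that at each vertex $P_i$ the normal line to $E$ at $P_i$ bisects the interior angle of the triangle at $P_i$. All sides of all such orbits are tangent to the confocal ellipse $C$ described in the claim. *)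

theory Defs
  imports "HOL-Analysis.Analysis"
begin

definition ellipse :: "real \<Rightarrow> real \<Rightarrow> (real \<times> real) set" where
  "ellipse a b = {p. (fst p)\<^sup>2 / a\<^sup>2 + (snd p)\<^sup>2 / b\<^sup>2 = 1}"

definition ellipse_region :: "real \<Rightarrow> real \<Rightarrow> (real \<times> real) set" where
  "ellipse_region a b = {p. (fst p)\<^sup>2 / a\<^sup>2 + (snd p)\<^sup>2 / b\<^sup>2 \<le> 1}"

text \<open>Outward normal direction of the ellipse at p (gradient of the defining function, up to 2).\<close>
definition ellipse_normal :: "real \<Rightarrow> real \<Rightarrow> real \<times> real \<Rightarrow> real \<times> real" where
  "ellipse_normal a b p = (fst p / a\<^sup>2, snd p / b\<^sup>2)"

definition cross2 :: "real \<times> real \<Rightarrow> real \<times> real \<Rightarrow> real" where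
  "cross2 u v = fst u * snd v - snd u * fst v"

text \<open>The normal line at P bisects the interior angle of the triangle at P with other
  vertices Q, S: the interior bisector direction (sum of unit vectors towards Q and S)
  is parallel to the normal.\<close>
definition normal_bisects :: "real \<Rightarrow> real \<Rightarrow> real \<times> real \<Rightarrow> real \<times> real \<Rightarrow> real \<times> real \<Rightarrow> bool" where
  "normal_bisects a b P Q S \<longleftrightarrow>
     cross2 ((1 / norm (Q - P)) *\<^sub>R (Q - P) + (1 / norm (S - P)) *\<^sub>R (S - P))
            (ellipse_normal a b P) = 0"

definition billiard_3_orbit ::
  "real \<Rightarrow> real \<Rightarrow> real \<times> real \<Rightarrow> real \<times> real \<Rightarrow> real \<times> real \<Rightarrow> bool" where
  "billiard_3_orbit a b P1 P2 P3 \<longleftrightarrow>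
     \<not> collinear {P1, P2, P3} \<and>
     P1 \<in> ellipse a b \<and> P2 \<in> ellipse a b \<and> P3 \<in> ellipse a b \<and>
     normal_bisects a b P1 P2 P3 \<and> normal_bisects a b P2 P3 P1 \<and> normal_bisects a b P3 P1 P2"

definition circumradius :: "real \<times> real \<Rightarrow> real \<times> real \<Rightarrow> real \<times> real \<Rightarrow> real" where
  "circumradius P1 P2 P3 =
     (THE R. \<exists>Z. dist Z P1 = R \<and> dist Z P2 = R \<and> dist Z P3 = R)"

definition inradius :: "real \<times> real \<Rightarrow> real \<times> real \<Rightarrow> real \<times> real \<Rightarrow> real" where
  "inradius P1 P2 P3 =
     (THE r. \<exists>I \<in> interior (convex hull {P1, P2, P3}).
        infdist I (affine hull {P1, P2}) = r \<and>
        infdist I (affine hull {P2, P3}) = r \<and>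
        infdist I (affine hull {P3, P1}) = r)"

end

theory Submission
  imports Defs
begin

text \<open>Under the affine map \<open>(x, y) \<mapsto> (x / a, y / b)\<close> a 3-periodic orbit becomes a triangle
  \<open>z\<^sub>1 z\<^sub>2 z\<^sub>3\<close> inscribed in the unit circle. Since the normal \<open>n\<close> to the ellipse at \<open>P\<close>
  satisfies \<open>(Q - P) \<bullet> n = (z\<^sub>Q - z\<^sub>P) \<bullet> z\<^sub>P = - \<bar>z\<^sub>Q - z\<^sub>P\<bar>\<^sup>2 / 2\<close>, the reflection law
  at a vertex says that \<open>\<bar>z\<^sub>i - z\<^sub>j\<bar>\<^sup>2 / \<bar>P\<^sub>i P\<^sub>j\<bar>\<close> is the same for the two sides through
  it; so \<open>\<bar>z\<^sub>i - z\<^sub>j\<bar>\<^sup>2 = k \<bar>P\<^sub>i P\<^sub>j\<bar>\<close> for a single \<open>k > 0\<close>. Squaring, each of these becomes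
  the symmetric biquadratic relation \<open>2 (z\<^sub>i\<^sup>2 + z\<^sub>j\<^sup>2) - \<mu> (z\<^sub>i\<^sup>2 z\<^sub>j\<^sup>2 + 1) - 2 \<alpha> z\<^sub>i z\<^sub>j = 0\<close>,
  where \<open>\<mu>, \<alpha>\<close> are affine in \<open>\<kappa> = k\<^sup>2\<close>. For three distinct roots Vieta's formulas give
  \<open>\<mu>\<^sup>2 = 4 + 4 \<alpha>\<close>, which is a quadratic equation for \<open>\<kappa>\<close>, and \<open>\<bar>z\<^sub>1 + z\<^sub>2 + z\<^sub>3\<bar> = \<bar>\<mu>\<bar> / 2\<close>,
  which yields the sum of the squared chords. With \<open>r = 2 area / perimeter\<close> and
  \<open>R = (product of the sides) / (4 area)\<close>, the ratio \<open>r / (2 R)\<close> becomes a function of \<open>\<kappa>\<close>, and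
  both it and \<open>A\<^sub>c / A\<^sub>b = a\<^sub>c b\<^sub>c / (a b)\<close> equal \<open>(\<delta> - b\<^sup>2) (a\<^sup>2 - \<delta>) / (a\<^sup>2 - b\<^sup>2)\<^sup>2\<close>.\<close>

section \<open>Area of an ellipse\<close>

lemma ellipse_region_eq_vimage:
  "ellipse_region p q = (\<lambda>z. (fst z / p, snd z / q)) -` cball 0 1"
  by (auto simp: ellipse_region_def dist_norm norm_Pair real_sqrt_le_1_iff power_divide)

lemma measure_ellipse_region:
  assumes "p > 0" and "q > 0"
  shows "measure lborel (ellipse_region p q) = pi * p * q"
proof -
  define c :: "real \<times> real \<Rightarrow> real" where "c j = (if j = (1, 0) then 1 / p else 1 / q)" for j
  define S :: "real \<times> real \<Rightarrow> real \<times> real" where "S = (\<lambda>z. (fst z / p, snd z / q))"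
  have "(\<lambda>z. 0 + (\<Sum>j\<in>Basis. (c j * (z \<bullet> j)) *\<^sub>R j)) = S"
    by (auto simp: fun_eq_iff S_def Basis_prod_def c_def inner_Pair)
  then have "lborel = density (distr lborel borel S) (\<lambda>_. \<Prod>j\<in>Basis. \<bar>c j\<bar>)"
    using lborel_affine_euclidean[of c 0] assms by (simp add: c_def)
  then have "measure lborel (cball (0::real \<times> real) 1)
      = measure (density (distr lborel borel S) (\<lambda>_. \<Prod>j\<in>Basis. \<bar>c j\<bar>)) (cball 0 1)"
    by simp
  also have "\<dots> = measure lborel (ellipse_region p q) / (p * q)"
  proof -
    have "S \<in> borel_measurable borel"
      using assms unfolding S_def by (auto intro!: borel_measurable_continuous_onI continuous_intros)
    then show ?thesis
      using assms by (simp add: measure_density_const measure_distr Basis_prod_def c_def)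
        (simp add: S_def ellipse_region_eq_vimage)
  qed
  finally show ?thesis
    using assms by (simp add: content_cball unit_ball_vol_2 field_simps)
qed

section \<open>Triangles in the plane\<close>

lemma dist_Pair_Pair_real:
  fixes x1 y1 x2 y2 :: real
  shows "dist (x1, y1) (x2, y2) = sqrt ((x1 - x2)\<^sup>2 + (y1 - y2)\<^sup>2)"
  by (simp add: dist_Pair_Pair dist_real_def)

lemma dist_Pair_Pair_real_sq:
  fixes x1 y1 x2 y2 :: real
  shows "(dist (x1, y1) (x2, y2))\<^sup>2 = (x1 - x2)\<^sup>2 + (y1 - y2)\<^sup>2"
  by (simp add: dist_Pair_Pair_real)

lemma cross2_eq_0_iff_collinear: "cross2 X Y = 0 \<longleftrightarrow> collinear {0, X, Y}"
proof -
  obtain x1 x2 y1 y2 where XY: "X = (x1, x2)" "Y = (y1, y2)"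
    by (cases X, cases Y)
  have "x1 * y2 = x2 * y1 \<longleftrightarrow> X = 0 \<or> Y = 0 \<or> (\<exists>c. Y = c *\<^sub>R X)"
  proof
    assume h: "x1 * y2 = x2 * y1"
    consider "x1 \<noteq> 0" | "x1 = 0" "x2 \<noteq> 0" | "X = 0"
      using XY by (metis zero_prod_def)
    then show "X = 0 \<or> Y = 0 \<or> (\<exists>c. Y = c *\<^sub>R X)"
    proof cases
      case 1
      then have "Y = (y1 / x1) *\<^sub>R X"
        using h by (simp add: XY field_simps)
      then show ?thesis by blast
    next
      case 2
      then have "Y = (y2 / x2) *\<^sub>R X"
        using h by (simp add: XY)
      then show ?thesis by blast
    qed simp
  qed (auto simp: XY zero_prod_def)
  then show ?thesis
    by (simp add: collinear_lemma cross2_def XY)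
qed

lemma cross2_scaleR_right_self: "cross2 X (c *\<^sub>R X) = 0"
  by (simp add: cross2_def)

lemma collinear_iff_cross2: "collinear {P, Q, S} \<longleftrightarrow> cross2 (Q - P) (S - P) = 0"
proof -
  have "collinear {P, Q, S} \<longleftrightarrow> collinear {Q, P, S}"
    by (simp add: insert_commute)
  also have "\<dots> \<longleftrightarrow> collinear {0, Q - P, S - P}"
    by (rule collinear_3) simp
  finally show ?thesis
    by (simp add: cross2_eq_0_iff_collinear)
qed

lemma not_collinear_imp_distinct:
  assumes "\<not> collinear {P1, P2, P3}"
  shows "P1 \<noteq> P2" and "P2 \<noteq> P3" and "P3 \<noteq> P1"
  using assms by (auto simp: collinear_2 insert_commute)

lemma infdist_eq_dist_nearest:
  assumes "y \<in> A" and "\<And>z. z \<in> A \<Longrightarrow> dist x y \<le> dist x z"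
  shows "infdist x A = dist x y"
proof (rule antisym)
  have "A \<noteq> {}"
    using assms(1) by blast
  then show "dist x y \<le> infdist x A"
    unfolding infdist_notempty[OF \<open>A \<noteq> {}\<close>] using assms(2) by (intro cINF_greatest) auto
qed (rule infdist_le[OF assms(1)])

lemma infdist_affine_hull_2:
  fixes P Q X :: "real \<times> real"
  assumes "P \<noteq> Q"
  shows "infdist X (affine hull {P, Q}) = \<bar>cross2 (Q - P) (X - P)\<bar> / dist P Q"
proof -
  obtain p1 p2 q1 q2 x1 x2 where PQX: "P = (p1, p2)" "Q = (q1, q2)" "X = (x1, x2)"
    by (cases P, cases Q, cases X)
  define L where "L = (q1 - p1)\<^sup>2 + (q2 - p2)\<^sup>2"
  define s where "s = (q1 - p1) * (x1 - p1) + (q2 - p2) * (x2 - p2)"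
  have "L > 0"
    using assms by (auto simp: PQX L_def sum_power2_gt_zero_iff)
  have dPQ: "(dist P Q)\<^sup>2 = L"
    by (simp add: PQX dist_Pair_Pair_real_sq L_def power2_commute)
  \<comment> \<open>Lagrange's identity for the distance to the point with parameter t\<close>
  have dist_line: "(dist X (P + t *\<^sub>R (Q - P)))\<^sup>2 * L = (cross2 (Q - P) (X - P))\<^sup>2 + (t * L - s)\<^sup>2" for t
  proof -
    have D: "(dist X (P + t *\<^sub>R (Q - P)))\<^sup>2 = (x1 - p1 - t * (q1 - p1))\<^sup>2 + (x2 - p2 - t * (q2 - p2))\<^sup>2"
      by (simp add: PQX dist_Pair_Pair_real_sq algebra_simps)
    show ?thesis
      unfolding D by (simp add: PQX L_def s_def cross2_def power2_eq_square algebra_simps)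
  qed
  define Y where "Y = P + (s / L) *\<^sub>R (Q - P)"
  have "infdist X (affine hull {P, Q}) = dist X Y"
    unfolding affine_hull_2_alt
  proof (rule infdist_eq_dist_nearest)
    show "Y \<in> range (\<lambda>t. P + t *\<^sub>R (Q - P))"
      unfolding Y_def by (rule rangeI)
    fix Z assume "Z \<in> range (\<lambda>t. P + t *\<^sub>R (Q - P))"
    then obtain t where Z: "Z = P + t *\<^sub>R (Q - P)" by blast
    have "(dist X Y)\<^sup>2 * L \<le> (dist X Z)\<^sup>2 * L"
      unfolding Y_def Z dist_line using \<open>L > 0\<close> by simp
    then have "(dist X Y)\<^sup>2 \<le> (dist X Z)\<^sup>2"
      using \<open>L > 0\<close> by simp
    then show "dist X Y \<le> dist X Z"
      by (rule power2_le_imp_le) simp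
  qed
  also have "\<dots> = \<bar>cross2 (Q - P) (X - P)\<bar> / dist P Q"
  proof (rule power2_eq_iff_nonneg[THEN iffD1])
    have "(dist X Y)\<^sup>2 * L = (cross2 (Q - P) (X - P))\<^sup>2"
      unfolding Y_def dist_line using \<open>L > 0\<close> by simp
    then show "(dist X Y)\<^sup>2 = (\<bar>cross2 (Q - P) (X - P)\<bar> / dist P Q)\<^sup>2"
      using \<open>L > 0\<close> by (simp add: power_divide dPQ eq_divide_eq)
  qed simp_all
  finally show ?thesis .
qed

lemma cross2_affine_combination:
  fixes P1 P2 P3 :: "real \<times> real"
  assumes "l1 + l2 + l3 = 1"
  defines "I \<equiv> l1 *\<^sub>R P1 + l2 *\<^sub>R P2 + l3 *\<^sub>R P3"
  shows "cross2 (P2 - P1) (I - P1) = l3 * cross2 (P2 - P1) (P3 - P1)"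
    and "cross2 (P3 - P2) (I - P2) = l1 * cross2 (P2 - P1) (P3 - P1)"
    and "cross2 (P1 - P3) (I - P3) = l2 * cross2 (P2 - P1) (P3 - P1)"
proof -
  have l1: "l1 = 1 - l2 - l3"
    using assms(1) by simp
  obtain x1 y1 x2 y2 x3 y3 where P: "P1 = (x1, y1)" "P2 = (x2, y2)" "P3 = (x3, y3)"
    by (cases P1, cases P2, cases P3)
  show "cross2 (P2 - P1) (I - P1) = l3 * cross2 (P2 - P1) (P3 - P1)"
    and "cross2 (P3 - P2) (I - P2) = l1 * cross2 (P2 - P1) (P3 - P1)"
    and "cross2 (P1 - P3) (I - P3) = l2 * cross2 (P2 - P1) (P3 - P1)"
    unfolding I_def l1 P cross2_def by (simp_all add: algebra_simps)
qed

lemma infdist_side_lines: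
  fixes P1 P2 P3 :: "real \<times> real"
  assumes nc: "\<not> collinear {P1, P2, P3}" and "l1 + l2 + l3 = 1"
  defines "I \<equiv> l1 *\<^sub>R P1 + l2 *\<^sub>R P2 + l3 *\<^sub>R P3"
    and "C \<equiv> \<bar>cross2 (P2 - P1) (P3 - P1)\<bar>"
  shows "infdist I (affine hull {P1, P2}) = \<bar>l3\<bar> * C / dist P1 P2"
    and "infdist I (affine hull {P2, P3}) = \<bar>l1\<bar> * C / dist P2 P3"
    and "infdist I (affine hull {P3, P1}) = \<bar>l2\<bar> * C / dist P3 P1"
  using not_collinear_imp_distinct[OF nc] cross2_affine_combination[OF assms(2)]
  by (simp_all add: infdist_affine_hull_2 I_def C_def abs_mult)

lemma incenter_equidistant:
  fixes P1 P2 P3 :: "real \<times> real"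
  assumes nc: "\<not> collinear {P1, P2, P3}"
  defines "p \<equiv> dist P1 P2 + dist P2 P3 + dist P3 P1" and "C \<equiv> \<bar>cross2 (P2 - P1) (P3 - P1)\<bar>"
  defines "I \<equiv> (dist P2 P3 / p) *\<^sub>R P1 + (dist P3 P1 / p) *\<^sub>R P2 + (dist P1 P2 / p) *\<^sub>R P3"
  shows "I \<in> interior (convex hull {P1, P2, P3})"
    and "infdist I (affine hull {P1, P2}) = C / p" and "infdist I (affine hull {P2, P3}) = C / p"
    and "infdist I (affine hull {P3, P1}) = C / p"
proof -
  note distinct = not_collinear_imp_distinct[OF nc]
  have sides: "dist P1 P2 > 0" "dist P2 P3 > 0" "dist P3 P1 > 0"
    using distinct by simp_all
  then have "p > 0"
    unfolding p_def by linarith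
  have "dist P2 P3 + dist P3 P1 + dist P1 P2 = p"
    by (simp add: p_def)
  then have sum1: "dist P2 P3 / p + dist P3 P1 / p + dist P1 P2 / p = 1"
    using \<open>p > 0\<close> by (simp add: add_divide_distrib[symmetric])
  define u where
    "u x = (if x = P1 then dist P2 P3 / p else if x = P2 then dist P3 P1 / p else dist P1 P2 / p)" for x
  have "interior (convex hull {P1, P2, P3}) =
     {y. \<exists>u. (\<forall>x\<in>{P1, P2, P3}. 0 < u x) \<and> sum u {P1, P2, P3} = 1 \<and> (\<Sum>x\<in>{P1, P2, P3}. u x *\<^sub>R x) = y}"
    using interior_convex_hull_explicit_minimal[of "{P1, P2, P3}"] nc distinct
    by (simp add: collinear_3_eq_affine_dependent)
  moreover have "(\<forall>x\<in>{P1, P2, P3}. 0 < u x) \<and> sum u {P1, P2, P3} = 1 \<and> (\<Sum>x\<in>{P1, P2, P3}. u x *\<^sub>R x) = I"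
    using distinct sides sum1 \<open>p > 0\<close> by (simp add: u_def I_def)
  ultimately show "I \<in> interior (convex hull {P1, P2, P3})"
    by blast
  show "infdist I (affine hull {P1, P2}) = C / p" and "infdist I (affine hull {P2, P3}) = C / p"
    and "infdist I (affine hull {P3, P1}) = C / p"
    unfolding I_def infdist_side_lines[OF nc sum1, folded C_def] using sides \<open>p > 0\<close> by simp_all
qed

lemma equidistant_from_sides:
  fixes P1 P2 P3 :: "real \<times> real"
  assumes nc: "\<not> collinear {P1, P2, P3}" and "I \<in> convex hull {P1, P2, P3}"
    and "infdist I (affine hull {P1, P2}) = r" and "infdist I (affine hull {P2, P3}) = r"
    and "infdist I (affine hull {P3, P1}) = r"
  shows "r = \<bar>cross2 (P2 - P1) (P3 - P1)\<bar> / (dist P1 P2 + dist P2 P3 + dist P3 P1)"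
proof -
  define C where "C = \<bar>cross2 (P2 - P1) (P3 - P1)\<bar>"
  obtain l1 l2 l3 where l: "0 \<le> l1" "0 \<le> l2" "0 \<le> l3" "l1 + l2 + l3 = 1"
      and I: "I = l1 *\<^sub>R P1 + l2 *\<^sub>R P2 + l3 *\<^sub>R P3"
    using assms(2) unfolding convex_hull_3 by blast
  have sides: "dist P1 P2 > 0" "dist P2 P3 > 0" "dist P3 P1 > 0"
    using not_collinear_imp_distinct[OF nc] by simp_all
  have r: "r = l3 * C / dist P1 P2" "r = l1 * C / dist P2 P3" "r = l2 * C / dist P3 P1"
    using assms(3-5) l(1-3) unfolding I infdist_side_lines[OF nc l(4), folded C_def] by simp_all
  have "r * dist P1 P2 = l3 * C"
    using r(1) sides(1) by simp
  moreover have "r * dist P2 P3 = l1 * C"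
    using r(2) sides(2) by simp
  moreover have "r * dist P3 P1 = l2 * C"
    using r(3) sides(3) by simp
  ultimately have "r * (dist P1 P2 + dist P2 P3 + dist P3 P1) = (l1 + l2 + l3) * C"
    by (simp add: algebra_simps)
  moreover have "dist P1 P2 + dist P2 P3 + dist P3 P1 > 0"
    using sides by linarith
  ultimately show ?thesis
    using l(4) by (simp add: C_def eq_divide_eq)
qed

lemma inradius_eq:
  fixes P1 P2 P3 :: "real \<times> real"
  assumes nc: "\<not> collinear {P1, P2, P3}"
  shows "inradius P1 P2 P3 =
    \<bar>cross2 (P2 - P1) (P3 - P1)\<bar> / (dist P1 P2 + dist P2 P3 + dist P3 P1)"
  unfolding inradius_def
  by (rule the_equality)
    (use incenter_equidistant[OF nc] equidistant_from_sides[OF nc] interior_subset in blast)+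

lemma dist_eq_dist_iff_inner:
  fixes Z P Q :: "'a::real_inner"
  shows "dist Z P = dist Z Q \<longleftrightarrow> 2 * ((Z - P) \<bullet> (Q - P)) = (norm (Q - P))\<^sup>2"
proof -
  have "dist Z P = dist Z Q \<longleftrightarrow> (dist Z P)\<^sup>2 = (dist Z Q)\<^sup>2"
    by (simp add: power2_eq_iff_nonneg)
  also have "(dist Z Q)\<^sup>2 = (norm ((Z - P) - (Q - P)))\<^sup>2"
    by (simp add: dist_norm)
  also have "\<dots> = (dist Z P)\<^sup>2 - 2 * ((Z - P) \<bullet> (Q - P)) + (norm (Q - P))\<^sup>2"
    by (simp add: power2_norm_eq_inner dist_norm inner_diff_left inner_diff_right inner_commute)
  finally show ?thesis
    by linarith
qed

lemma circumcenter_coordinates: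
  fixes x1 x2 y1 y2 w1 w2 :: real
  defines "c \<equiv> x1 * y2 - x2 * y1" and "nx \<equiv> x1\<^sup>2 + x2\<^sup>2" and "ny \<equiv> y1\<^sup>2 + y2\<^sup>2"
  assumes "c \<noteq> 0"
  shows "2 * (w1 * x1 + w2 * x2) = nx \<and> 2 * (w1 * y1 + w2 * y2) = ny \<longleftrightarrow>
    w1 = (y2 * nx - x2 * ny) / (2 * c) \<and> w2 = (x1 * ny - y1 * nx) / (2 * c)"
proof -
  have "2 * (w1 * x1 + w2 * x2) = nx \<and> 2 * (w1 * y1 + w2 * y2) = ny \<longleftrightarrow>
      2 * c * w1 = y2 * nx - x2 * ny \<and> 2 * c * w2 = x1 * ny - y1 * nx"
  proof
    assume "2 * (w1 * x1 + w2 * x2) = nx \<and> 2 * (w1 * y1 + w2 * y2) = ny"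
    then have hx: "2 * (w1 * x1 + w2 * x2) = nx" and hy: "2 * (w1 * y1 + w2 * y2) = ny"
      by simp_all
    have "2 * c * w1 = y2 * (2 * (w1 * x1 + w2 * x2)) - x2 * (2 * (w1 * y1 + w2 * y2))"
      by (simp add: c_def algebra_simps)
    moreover have "2 * c * w2 = x1 * (2 * (w1 * y1 + w2 * y2)) - y1 * (2 * (w1 * x1 + w2 * x2))"
      by (simp add: c_def algebra_simps)
    ultimately show "2 * c * w1 = y2 * nx - x2 * ny \<and> 2 * c * w2 = x1 * ny - y1 * nx"
      unfolding hx hy ..
  next
    assume "2 * c * w1 = y2 * nx - x2 * ny \<and> 2 * c * w2 = x1 * ny - y1 * nx"
    then have h1: "2 * c * w1 = y2 * nx - x2 * ny" and h2: "2 * c * w2 = x1 * ny - y1 * nx"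
      by simp_all
    have "c * (2 * (w1 * x1 + w2 * x2)) = x1 * (2 * c * w1) + x2 * (2 * c * w2)"
      and "c * (2 * (w1 * y1 + w2 * y2)) = y1 * (2 * c * w1) + y2 * (2 * c * w2)"
      by (simp_all add: algebra_simps)
    then have "c * (2 * (w1 * x1 + w2 * x2)) = c * nx" and "c * (2 * (w1 * y1 + w2 * y2)) = c * ny"
      unfolding h1 h2 by (simp_all add: c_def algebra_simps)
    then show "2 * (w1 * x1 + w2 * x2) = nx \<and> 2 * (w1 * y1 + w2 * y2) = ny"
      using \<open>c \<noteq> 0\<close> by simp
  qed
  also have "\<dots> \<longleftrightarrow> w1 = (y2 * nx - x2 * ny) / (2 * c) \<and> w2 = (x1 * ny - y1 * nx) / (2 * c)"
    using \<open>c \<noteq> 0\<close> by (auto simp: field_simps)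
  finally show ?thesis .
qed

lemma equidistant_iff_circumcenter:
  fixes P1 P2 P3 Z :: "real \<times> real"
  assumes X: "P2 - P1 = (x1, x2)" and Y: "P3 - P1 = (y1, y2)" and "x1 * y2 - x2 * y1 \<noteq> 0"
  defines "c \<equiv> x1 * y2 - x2 * y1" and "nx \<equiv> x1\<^sup>2 + x2\<^sup>2" and "ny \<equiv> y1\<^sup>2 + y2\<^sup>2"
  shows "dist Z P1 = dist Z P2 \<and> dist Z P1 = dist Z P3 \<longleftrightarrow>
    Z = P1 + ((y2 * nx - x2 * ny) / (2 * c), (x1 * ny - y1 * nx) / (2 * c))"
proof -
  obtain w1 w2 where W: "Z - P1 = (w1, w2)"
    by fastforce
  have "dist Z P1 = dist Z P2 \<and> dist Z P1 = dist Z P3 \<longleftrightarrow>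
      2 * (w1 * x1 + w2 * x2) = nx \<and> 2 * (w1 * y1 + w2 * y2) = ny"
    by (simp add: dist_eq_dist_iff_inner W X Y nx_def ny_def norm_Pair)
  also have "\<dots> \<longleftrightarrow> Z - P1 = ((y2 * nx - x2 * ny) / (2 * c), (x1 * ny - y1 * nx) / (2 * c))"
    using circumcenter_coordinates[OF assms(3)] by (simp add: W c_def nx_def ny_def)
  finally show ?thesis
    by (auto simp: algebra_simps)
qed

lemma circumradius_eq:
  fixes P1 P2 P3 :: "real \<times> real"
  assumes nc: "\<not> collinear {P1, P2, P3}"
  shows "circumradius P1 P2 P3 =
    dist P1 P2 * dist P2 P3 * dist P3 P1 / (2 * \<bar>cross2 (P2 - P1) (P3 - P1)\<bar>)"
proof -
  obtain x1 x2 y1 y2 where X: "P2 - P1 = (x1, x2)" and Y: "P3 - P1 = (y1, y2)"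
    by fastforce
  define c where "c = x1 * y2 - x2 * y1"
  define nx ny where "nx = x1\<^sup>2 + x2\<^sup>2" and "ny = y1\<^sup>2 + y2\<^sup>2"
  define M where "M = P1 + ((y2 * nx - x2 * ny) / (2 * c), (x1 * ny - y1 * nx) / (2 * c))"
  define R where "R = dist P1 P2 * dist P2 P3 * dist P3 P1 / (2 * \<bar>c\<bar>)"
  have "cross2 (P2 - P1) (P3 - P1) = c"
    by (simp add: cross2_def X Y c_def)
  then have "c \<noteq> 0"
    using nc by (simp add: collinear_iff_cross2)
  note center = equidistant_iff_circumcenter[OF X Y \<open>c \<noteq> 0\<close>[unfolded c_def], folded c_def nx_def ny_def, folded M_def]
  have "P2 - P3 = (x1 - y1, x2 - y2)"
    using X Y by (metis diff_diff_eq2 diff_add_cancel prod.inject minus_prod_def)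
  then have "(dist P1 P2)\<^sup>2 = nx" "(dist P3 P1)\<^sup>2 = ny" "(dist P2 P3)\<^sup>2 = (x1 - y1)\<^sup>2 + (x2 - y2)\<^sup>2"
    by (simp_all add: dist_norm norm_minus_commute[of P1] X Y norm_Pair nx_def ny_def power2_commute)
  then have "R\<^sup>2 * (2 * c)\<^sup>2 = nx * ny * ((x1 - y1)\<^sup>2 + (x2 - y2)\<^sup>2)"
    using \<open>c \<noteq> 0\<close> by (simp add: R_def power_mult_distrib power_divide)
  also have "\<dots> = (y2 * nx - x2 * ny)\<^sup>2 + (x1 * ny - y1 * nx)\<^sup>2"
    unfolding nx_def ny_def by algebra
  also have "\<dots> = (dist M P1)\<^sup>2 * (2 * c)\<^sup>2"
    using \<open>c \<noteq> 0\<close> by (simp add: M_def dist_norm norm_Pair power_divide field_simps)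
  finally have "dist M P1 = R"
    using \<open>c \<noteq> 0\<close> by (simp add: power2_eq_iff_nonneg R_def)
  show ?thesis
    unfolding circumradius_def \<open>cross2 (P2 - P1) (P3 - P1) = c\<close> R_def[symmetric]
  proof (rule the_equality)
    show "\<exists>Z. dist Z P1 = R \<and> dist Z P2 = R \<and> dist Z P3 = R"
      using center[of M] \<open>dist M P1 = R\<close> by metis
  next
    fix R' assume "\<exists>Z. dist Z P1 = R' \<and> dist Z P2 = R' \<and> dist Z P3 = R'"
    then show "R' = R"
      using center \<open>dist M P1 = R\<close> by metis
  qed
qed

lemma inradius_div_circumradius:
  fixes P1 P2 P3 :: "real \<times> real"
  assumes nc: "\<not> collinear {P1, P2, P3}"
  shows "inradius P1 P2 P3 / (2 * circumradius P1 P2 P3) = (cross2 (P2 - P1) (P3 - P1))\<^sup>2 /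
    ((dist P1 P2 + dist P2 P3 + dist P3 P1) * (dist P1 P2 * dist P2 P3 * dist P3 P1))"
proof -
  have "cross2 (P2 - P1) (P3 - P1) \<noteq> 0"
    using nc collinear_iff_cross2 by blast
  moreover have "dist P1 P2 > 0" "dist P2 P3 > 0" "dist P3 P1 > 0"
    using not_collinear_imp_distinct[OF nc] by simp_all
  ultimately show ?thesis
    unfolding inradius_eq[OF nc] circumradius_eq[OF nc]
    by (simp add: field_simps power2_eq_square)
qed

section \<open>The reflection law in eccentric coordinates\<close>

text \<open>The argument of \<open>eccentric_point a b P\<close> is the eccentric anomaly of \<open>P\<close>.\<close>

definition eccentric_point :: "real \<Rightarrow> real \<Rightarrow> real \<times> real \<Rightarrow> complex" where
  "eccentric_point a b P = Complex (fst P / a) (snd P / b)"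

lemma ellipse_iff_norm_eccentric_point: "P \<in> ellipse a b \<longleftrightarrow> norm (eccentric_point a b P) = 1"
  by (simp add: ellipse_def eccentric_point_def cmod_def power_divide)

lemma inner_ellipse_normal:
  "(Q - P) \<bullet> ellipse_normal a b P
     = (eccentric_point a b Q - eccentric_point a b P) \<bullet> eccentric_point a b P"
  by (cases P, cases Q) (simp add: ellipse_normal_def eccentric_point_def inner_complex_def
      power2_eq_square diff_divide_distrib[symmetric])

lemma dist_eq_eccentric_point:
  fixes P Q :: "real \<times> real"
  assumes "a \<noteq> 0" and "b \<noteq> 0"
  defines "z \<equiv> eccentric_point a b P" and "w \<equiv> eccentric_point a b Q"
  shows "dist P Q = sqrt (a\<^sup>2 * (Re (z - w))\<^sup>2 + b\<^sup>2 * (Im (z - w))\<^sup>2)"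
  using assms by (cases P, cases Q) (simp add: dist_Pair_Pair_real eccentric_point_def power_divide field_simps)

lemma cross2_eq_eccentric_point:
  fixes P1 P2 P3 :: "real \<times> real"
  assumes "a \<noteq> 0" and "b \<noteq> 0"
  shows "cross2 (P2 - P1) (P3 - P1) = a * b *
    Im (cnj (eccentric_point a b P2 - eccentric_point a b P1) * (eccentric_point a b P3 - eccentric_point a b P1))"
proof -
  obtain x1 y1 x2 y2 x3 y3 where P: "P1 = (x1, y1)" "P2 = (x2, y2)" "P3 = (x3, y3)"
    by (cases P1, cases P2, cases P3)
  have "Im (cnj (eccentric_point a b P2 - eccentric_point a b P1) * (eccentric_point a b P3 - eccentric_point a b P1))
      = ((x2 - x1) * (y3 - y1) - (y2 - y1) * (x3 - x1)) / (a * b)"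
    using assms by (simp add: P eccentric_point_def field_simps)
  then show ?thesis
    using assms by (simp add: P cross2_def)
qed

lemma inner_diff_unit:
  fixes x y :: "'a::real_inner"
  assumes "norm x = 1" and "norm y = 1"
  shows "(y - x) \<bullet> x = - (dist x y)\<^sup>2 / 2"
proof -
  have "x \<bullet> x = 1" and "y \<bullet> y = 1"
    using assms by (simp_all add: power2_norm_eq_inner[symmetric])
  then show ?thesis
    by (simp add: dist_norm power2_norm_eq_inner inner_diff_left inner_diff_right inner_commute)
qed

lemma unit_sum_parallel_imp_diff_orthogonal:
  fixes u v n :: "real \<times> real"
  assumes "norm u = 1" and "norm v = 1" and "cross2 (u + v) n = 0" and "u + v \<noteq> 0"
  shows "(u - v) \<bullet> n = 0"
proof -
  obtain c where "n = c *\<^sub>R (u + v)"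
    using assms(3,4) unfolding cross2_eq_0_iff_collinear collinear_lemma
    by (metis scale_zero_left)
  moreover have "u \<bullet> u = 1" and "v \<bullet> v = 1"
    using assms(1,2) by (simp_all add: power2_norm_eq_inner[symmetric])
  then have "(u - v) \<bullet> (u + v) = 0"
    by (simp add: inner_diff_left inner_diff_right inner_add_left inner_add_right inner_commute)
  ultimately show ?thesis
    by simp
qed

lemma normal_bisects_chord_ratio:
  fixes P Q S :: "real \<times> real"
  assumes "P \<in> ellipse a b" "Q \<in> ellipse a b" "S \<in> ellipse a b"
    and nc: "\<not> collinear {P, Q, S}" and "normal_bisects a b P Q S"
  shows "(dist (eccentric_point a b P) (eccentric_point a b Q))\<^sup>2 * dist P S
       = (dist (eccentric_point a b P) (eccentric_point a b S))\<^sup>2 * dist P Q"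
proof -
  define n where "n = ellipse_normal a b P"
  define dQ dS where "dQ = norm (Q - P)" and "dS = norm (S - P)"
  define u v where "u = (1 / dQ) *\<^sub>R (Q - P)" and "v = (1 / dS) *\<^sub>R (S - P)"
  have "dQ > 0" "dS > 0"
    using not_collinear_imp_distinct[OF nc] by (auto simp: dQ_def dS_def)
  then have "norm u = 1" "norm v = 1"
    by (simp_all add: u_def v_def dQ_def dS_def)
  have "u + v \<noteq> 0"
  proof
    assume "u + v = 0"
    have "S - P = dS *\<^sub>R v"
      using \<open>dS > 0\<close> by (simp add: v_def)
    also have "v = - u"
      using \<open>u + v = 0\<close> by (simp add: add_eq_0_iff2 add.commute)
    finally have "S - P = (- dS / dQ) *\<^sub>R (Q - P)"
      by (simp add: u_def)
    then have "cross2 (Q - P) (S - P) = 0"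
      by (metis cross2_scaleR_right_self)
    with nc show False
      by (simp add: collinear_iff_cross2)
  qed
  then have "(u - v) \<bullet> n = 0"
    using assms(5) \<open>norm u = 1\<close> \<open>norm v = 1\<close> unfolding n_def
    by (intro unit_sum_parallel_imp_diff_orthogonal) (simp_all add: normal_bisects_def u_def v_def dQ_def dS_def)
  then have "(Q - P) \<bullet> n / dQ = (S - P) \<bullet> n / dS"
    by (simp add: u_def v_def inner_diff_left)
  moreover have "(Q - P) \<bullet> n = - (dist (eccentric_point a b P) (eccentric_point a b Q))\<^sup>2 / 2"
    and "(S - P) \<bullet> n = - (dist (eccentric_point a b P) (eccentric_point a b S))\<^sup>2 / 2"
    using assms(1-3) unfolding n_def inner_ellipse_normal
    by (simp_all add: inner_diff_unit ellipse_iff_norm_eccentric_point)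
  moreover have "dist P Q = dQ" "dist P S = dS"
    by (simp_all add: dQ_def dS_def dist_norm norm_minus_commute)
  ultimately show ?thesis
    using \<open>dQ > 0\<close> \<open>dS > 0\<close> by (simp add: field_simps)
qed

lemma eccentric_point_eq_iff:
  assumes "a \<noteq> 0" and "b \<noteq> 0"
  shows "eccentric_point a b P = eccentric_point a b Q \<longleftrightarrow> P = Q"
  using assms by (cases P, cases Q) (auto simp: eccentric_point_def complex_eq_iff)

lemma billiard_3_orbit_chords_proportional:
  fixes P1 P2 P3 :: "real \<times> real"
  assumes "a \<noteq> 0" and "b \<noteq> 0" and orbit: "billiard_3_orbit a b P1 P2 P3"
  defines "z1 \<equiv> eccentric_point a b P1" and "z2 \<equiv> eccentric_point a b P2"
    and "z3 \<equiv> eccentric_point a b P3"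
  obtains k where "k > 0" and "(dist z1 z2)\<^sup>2 = k * dist P1 P2"
    and "(dist z2 z3)\<^sup>2 = k * dist P2 P3" and "(dist z3 z1)\<^sup>2 = k * dist P3 P1"
proof -
  have nc: "\<not> collinear {P1, P2, P3}" and nc': "\<not> collinear {P2, P3, P1}"
    and on: "P1 \<in> ellipse a b" "P2 \<in> ellipse a b" "P3 \<in> ellipse a b"
    and nb: "normal_bisects a b P1 P2 P3" "normal_bisects a b P2 P3 P1"
    using orbit by (auto simp: billiard_3_orbit_def insert_commute)
  have at_P1: "(dist z1 z2)\<^sup>2 * dist P1 P3 = (dist z1 z3)\<^sup>2 * dist P1 P2"
    using normal_bisects_chord_ratio[OF on nc nb(1)] by (simp add: z1_def z2_def z3_def)
  have at_P2: "(dist z2 z3)\<^sup>2 * dist P2 P1 = (dist z2 z1)\<^sup>2 * dist P2 P3"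
    using normal_bisects_chord_ratio[OF on(2,3,1) nc' nb(2)] by (simp add: z1_def z2_def z3_def)
  have "dist P1 P2 > 0"
    using not_collinear_imp_distinct[OF nc] by simp
  moreover have "dist z1 z2 > 0"
    using not_collinear_imp_distinct[OF nc] eccentric_point_eq_iff[OF assms(1,2)] by (simp add: z1_def z2_def)
  ultimately show thesis
    using at_P1 at_P2
    by (intro that[of "(dist z1 z2)\<^sup>2 / dist P1 P2"]) (auto simp: field_simps dist_commute)
qed

section \<open>Triangles inscribed in the unit circle\<close>

lemma Re_sq_add_Im_sq_eq_1:
  assumes "norm z = 1"
  shows "(Re z)\<^sup>2 + (Im z)\<^sup>2 = 1"
  using assms by (metis cmod_power2 one_power2)

lemma chord_relation:
  fixes z w :: complex and a b k :: real
  assumes "norm z = 1" and "norm w = 1" and "z \<noteq> w"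
    and chord: "(dist z w)\<^sup>2 = k * sqrt (a\<^sup>2 * (Re (z - w))\<^sup>2 + b\<^sup>2 * (Im (z - w))\<^sup>2)"
  shows "2 * Re (z * cnj w) - k\<^sup>2 * (a\<^sup>2 - b\<^sup>2) / 2 * Re (z * w) = 2 - k\<^sup>2 * (a\<^sup>2 + b\<^sup>2) / 2"
proof -
  define e where "e = (dist z w)\<^sup>2"
  note unit = Re_sq_add_Im_sq_eq_1[OF assms(1)] Re_sq_add_Im_sq_eq_1[OF assms(2)]
  have e: "e = 2 - 2 * Re (z * cnj w)"
    using unit unfolding e_def dist_norm cmod_power2 by simp algebra
  \<comment> \<open>for unit vectors \<open>(z - w)\<^sup>2 = - e z w\<close>\<close>
  have D: "a\<^sup>2 * (Re (z - w))\<^sup>2 + b\<^sup>2 * (Im (z - w))\<^sup>2 = e * ((a\<^sup>2 + b\<^sup>2) / 2 - (a\<^sup>2 - b\<^sup>2) / 2 * Re (z * w))"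
    using unit unfolding e by (simp add: power2_eq_square) algebra
  have "e\<^sup>2 = k\<^sup>2 * (a\<^sup>2 * (Re (z - w))\<^sup>2 + b\<^sup>2 * (Im (z - w))\<^sup>2)"
    using chord by (simp add: e_def power_mult_distrib)
  then have "e * e = e * (k\<^sup>2 * ((a\<^sup>2 + b\<^sup>2) / 2 - (a\<^sup>2 - b\<^sup>2) / 2 * Re (z * w)))"
    unfolding D by (simp add: power2_eq_square algebra_simps)
  moreover have "e \<noteq> 0"
    using \<open>z \<noteq> w\<close> by (simp add: e_def)
  ultimately have "e = k\<^sup>2 * ((a\<^sup>2 + b\<^sup>2) / 2 - (a\<^sup>2 - b\<^sup>2) / 2 * Re (z * w))"
    by simp
  then show ?thesis
    unfolding e by (simp add: field_simps)
qed

lemma chord_relation_biquadratic: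
  fixes z w :: complex and \<mu> \<alpha> :: real
  assumes "norm z = 1" and "norm w = 1" and "2 * Re (z * cnj w) - \<mu> * Re (z * w) = \<alpha>"
  shows "2 * (z\<^sup>2 + w\<^sup>2) - of_real \<mu> * (z\<^sup>2 * w\<^sup>2 + 1) - 2 * of_real \<alpha> * z * w = 0"
proof -
  have "z * cnj z = 1" and "w * cnj w = 1"
    using assms(1,2) by (simp_all add: complex_norm_square[symmetric])
  then have "2 * (z\<^sup>2 + w\<^sup>2) - of_real \<mu> * (z\<^sup>2 * w\<^sup>2 + 1) - 2 * of_real \<alpha> * z * w
      = z * w * (2 * (z * cnj w + cnj (z * cnj w)) - \<mu> * (z * w + cnj (z * w)) - 2 * \<alpha>)"
    by (simp add: power2_eq_square) algebra
  also have "2 * (z * cnj w + cnj (z * cnj w)) - \<mu> * (z * w + cnj (z * w)) - 2 * \<alpha>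
      = of_real (2 * (2 * Re (z * cnj w) - \<mu> * Re (z * w) - \<alpha>))"
    by (simp only: complex_add_cnj) simp
  also have "2 * (2 * Re (z * cnj w) - \<mu> * Re (z * w) - \<alpha>) = 0"
    using assms(3) by simp
  finally show ?thesis
    by simp
qed

lemma symmetric_biquadratic_vieta:
  fixes z1 z2 z3 m \<alpha> :: complex
  assumes "z1 \<noteq> z2" and "z2 \<noteq> z3" and "z3 \<noteq> z1" and "z1 \<noteq> 0"
    and F12: "2 * (z1\<^sup>2 + z2\<^sup>2) - m * (z1\<^sup>2 * z2\<^sup>2 + 1) - 2 * \<alpha> * z1 * z2 = 0"
    and F23: "2 * (z2\<^sup>2 + z3\<^sup>2) - m * (z2\<^sup>2 * z3\<^sup>2 + 1) - 2 * \<alpha> * z2 * z3 = 0"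
    and F31: "2 * (z3\<^sup>2 + z1\<^sup>2) - m * (z3\<^sup>2 * z1\<^sup>2 + 1) - 2 * \<alpha> * z3 * z1 = 0"
  shows "m\<^sup>2 = 4 + 4 * \<alpha>" and "2 * (z1 + z2 + z3) = - m * (z1 * z2 * z3)"
proof -
  \<comment> \<open>\<open>z2\<close> and \<open>z3\<close> are the two roots of the same quadratic, whose coefficients depend on \<open>z1\<close>\<close>
  have "(z2 - z3) * ((2 - m * z1\<^sup>2) * (z2 + z3) - 2 * \<alpha> * z1) = 0"
    using F12 F31 by algebra
  then have sum23: "(2 - m * z1\<^sup>2) * (z2 + z3) - 2 * \<alpha> * z1 = 0"
    using \<open>z2 \<noteq> z3\<close> by simp
  have "(z1 - z3) * ((2 - m * z2\<^sup>2) * (z1 + z3) - 2 * \<alpha> * z2) = 0"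
    using F12 F23 by algebra
  then have sum13: "(2 - m * z2\<^sup>2) * (z1 + z3) - 2 * \<alpha> * z2 = 0"
    using \<open>z3 \<noteq> z1\<close> by simp
  have "(z1 - z2) * (- 2 - m * (z1 * z2 + z1 * z3 + z2 * z3) - 2 * \<alpha>) = 0"
    using sum23 sum13 by algebra
  then have "- 2 - m * (z1 * z2 + z1 * z3 + z2 * z3) - 2 * \<alpha> = 0"
    using \<open>z1 \<noteq> z2\<close> by simp
  then have pairs: "m * (z1 * z2 + z1 * z3 + z2 * z3) = - 2 - 2 * \<alpha>"
    by algebra
  have prod23: "(2 - m * z1\<^sup>2) * z2 * z3 - (2 * z1\<^sup>2 - m) = 0"
    using F12 sum23 by algebra
  have prod13: "(2 - m * z2\<^sup>2) * z1 * z3 - (2 * z2\<^sup>2 - m) = 0"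
    using F12 sum13 by algebra
  have "(z1 - z2) * (- 2 * z3 - m * (z1 * z2 * z3) - 2 * (z1 + z2)) = 0"
    using prod23 prod13 by algebra
  then have "- 2 * z3 - m * (z1 * z2 * z3) - 2 * (z1 + z2) = 0"
    using \<open>z1 \<noteq> z2\<close> by simp
  then show sum: "2 * (z1 + z2 + z3) = - m * (z1 * z2 * z3)"
    by algebra
  have "z1 * (m + 2 * (z1 * z2 + z1 * z3 + z2 * z3)) = 0"
    using prod23 sum by algebra
  then have "m + 2 * (z1 * z2 + z1 * z3 + z2 * z3) = 0"
    using \<open>z1 \<noteq> 0\<close> by simp
  then show "m\<^sup>2 = 4 + 4 * \<alpha>"
    using pairs by algebra
qed

lemma sum_dist_sq_add_norm_sum_sq:
  fixes x y z :: "'a::real_inner"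
  shows "(dist x y)\<^sup>2 + (dist y z)\<^sup>2 + (dist z x)\<^sup>2 + (norm (x + y + z))\<^sup>2
    = 3 * ((norm x)\<^sup>2 + (norm y)\<^sup>2 + (norm z)\<^sup>2)"
  by (simp add: dist_norm power2_norm_eq_inner inner_diff_left inner_diff_right inner_add_left
      inner_add_right inner_commute)

lemma unit_triangle_chord_relations:
  fixes z1 z2 z3 :: complex and \<mu> \<alpha> :: real
  assumes unit: "norm z1 = 1" "norm z2 = 1" "norm z3 = 1"
    and distinct: "z1 \<noteq> z2" "z2 \<noteq> z3" "z3 \<noteq> z1"
    and R12: "2 * Re (z1 * cnj z2) - \<mu> * Re (z1 * z2) = \<alpha>"
    and R23: "2 * Re (z2 * cnj z3) - \<mu> * Re (z2 * z3) = \<alpha>"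
    and R31: "2 * Re (z3 * cnj z1) - \<mu> * Re (z3 * z1) = \<alpha>"
  shows "\<mu>\<^sup>2 = 4 + 4 * \<alpha>" and "(dist z1 z2)\<^sup>2 + (dist z2 z3)\<^sup>2 + (dist z3 z1)\<^sup>2 = 8 - \<alpha>"
proof -
  have "z1 \<noteq> 0"
    using unit(1) by auto
  note vieta = symmetric_biquadratic_vieta[OF distinct \<open>z1 \<noteq> 0\<close>
      chord_relation_biquadratic[OF unit(1,2) R12] chord_relation_biquadratic[OF unit(2,3) R23]
      chord_relation_biquadratic[OF unit(3,1) R31]]
  have "complex_of_real (\<mu>\<^sup>2) = complex_of_real (4 + 4 * \<alpha>)"
    using vieta(1) by simp
  then show "\<mu>\<^sup>2 = 4 + 4 * \<alpha>"
    by (simp only: of_real_eq_iff)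
  have "2 * norm (z1 + z2 + z3) = norm (2 * (z1 + z2 + z3))"
    by (simp only: norm_mult) simp
  also have "\<dots> = norm (- of_real \<mu> * (z1 * z2 * z3))"
    by (simp only: vieta(2))
  also have "\<dots> = \<bar>\<mu>\<bar>"
    using unit by (simp add: norm_mult)
  finally have "(2 * norm (z1 + z2 + z3))\<^sup>2 = \<mu>\<^sup>2"
    by simp
  then have "(norm (z1 + z2 + z3))\<^sup>2 = 1 + \<alpha>"
    using \<open>\<mu>\<^sup>2 = 4 + 4 * \<alpha>\<close> by (simp add: power_mult_distrib)
  then show "(dist z1 z2)\<^sup>2 + (dist z2 z3)\<^sup>2 + (dist z3 z1)\<^sup>2 = 8 - \<alpha>"
    using sum_dist_sq_add_norm_sum_sq[of z1 z2 z3] unit by simp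
qed

lemma unit_triangle_cross_sq:
  fixes z1 z2 z3 :: complex
  assumes "norm z1 = 1" "norm z2 = 1" "norm z3 = 1"
  shows "4 * (Im (cnj (z2 - z1) * (z3 - z1)))\<^sup>2 = (dist z1 z2)\<^sup>2 * (dist z2 z3)\<^sup>2 * (dist z3 z1)\<^sup>2"
proof -
  have "Im (cnj (z2 - z1) * (z3 - z1)) = (Re z2 - Re z1) * (Im z3 - Im z1) - (Im z2 - Im z1) * (Re z3 - Re z1)"
    by (simp add: algebra_simps)
  moreover have "4 * ((Re z2 - Re z1) * (Im z3 - Im z1) - (Im z2 - Im z1) * (Re z3 - Re z1))\<^sup>2 =
    ((Re z1 - Re z2)\<^sup>2 + (Im z1 - Im z2)\<^sup>2) * ((Re z2 - Re z3)\<^sup>2 + (Im z2 - Im z3)\<^sup>2)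
      * ((Re z3 - Re z1)\<^sup>2 + (Im z3 - Im z1)\<^sup>2)"
    using Re_sq_add_Im_sq_eq_1[OF assms(1)] Re_sq_add_Im_sq_eq_1[OF assms(2)] Re_sq_add_Im_sq_eq_1[OF assms(3)]
    by algebra
  ultimately show ?thesis
    by (simp add: dist_norm cmod_power2)
qed

lemma inradius_div_circumradius_eccentric:
  fixes P1 P2 P3 :: "real \<times> real"
  assumes "a \<noteq> 0" and "b \<noteq> 0" and nc: "\<not> collinear {P1, P2, P3}"
    and on: "P1 \<in> ellipse a b" "P2 \<in> ellipse a b" "P3 \<in> ellipse a b"
  defines "z1 \<equiv> eccentric_point a b P1" and "z2 \<equiv> eccentric_point a b P2"
    and "z3 \<equiv> eccentric_point a b P3"
  assumes "k > 0" and chord12: "(dist z1 z2)\<^sup>2 = k * dist P1 P2"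
    and chord23: "(dist z2 z3)\<^sup>2 = k * dist P2 P3" and chord31: "(dist z3 z1)\<^sup>2 = k * dist P3 P1"
  shows "inradius P1 P2 P3 / (2 * circumradius P1 P2 P3)
    = a\<^sup>2 * b\<^sup>2 * k ^ 4 / (4 * ((dist z1 z2)\<^sup>2 + (dist z2 z3)\<^sup>2 + (dist z3 z1)\<^sup>2))"
proof -
  define E12 E23 E31 where "E12 = (dist z1 z2)\<^sup>2" and "E23 = (dist z2 z3)\<^sup>2"
    and "E31 = (dist z3 z1)\<^sup>2"
  have unit: "norm z1 = 1" "norm z2 = 1" "norm z3 = 1"
    using on by (simp_all add: z1_def z2_def z3_def ellipse_iff_norm_eccentric_point)
  have "E12 > 0" "E23 > 0" "E31 > 0"
    using not_collinear_imp_distinct[OF nc] eccentric_point_eq_iff[OF assms(1,2)]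
    by (simp_all add: E12_def E23_def E31_def z1_def z2_def z3_def)
  have "4 * (cross2 (P2 - P1) (P3 - P1))\<^sup>2 = a\<^sup>2 * b\<^sup>2 * (E12 * E23 * E31)"
    unfolding cross2_eq_eccentric_point[OF assms(1,2)] E12_def E23_def E31_def
      unit_triangle_cross_sq[OF unit, symmetric]
    by (simp add: z1_def z2_def z3_def power_mult_distrib)
  then have cross: "(cross2 (P2 - P1) (P3 - P1))\<^sup>2 = a\<^sup>2 * b\<^sup>2 * (E12 * E23 * E31) / 4"
    by simp
  have sides: "dist P1 P2 = E12 / k" "dist P2 P3 = E23 / k" "dist P3 P1 = E31 / k"
    using chord12 chord23 chord31 \<open>k > 0\<close> by (simp_all add: E12_def E23_def E31_def)
  have "(E12 / k + E23 / k + E31 / k) * (E12 / k * (E23 / k) * (E31 / k))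
      = (E12 + E23 + E31) * (E12 * E23 * E31) / k ^ 4"
    using \<open>k > 0\<close> by (simp add: field_simps power4_eq_xxxx)
  then have "inradius P1 P2 P3 / (2 * circumradius P1 P2 P3)
      = a\<^sup>2 * b\<^sup>2 * (E12 * E23 * E31) / 4 / ((E12 + E23 + E31) * (E12 * E23 * E31) / k ^ 4)"
    unfolding inradius_div_circumradius[OF nc] cross sides by simp
  also have "\<dots> = a\<^sup>2 * b\<^sup>2 * k ^ 4 / (4 * (E12 + E23 + E31))"
    using \<open>E12 > 0\<close> \<open>E23 > 0\<close> \<open>E31 > 0\<close> \<open>k > 0\<close> by simp
  finally show ?thesis
    by (simp add: E12_def E23_def E31_def)
qed

lemma billiard_3_orbit_inradius_div_circumradius:
  fixes P1 P2 P3 :: "real \<times> real"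
  assumes "a \<noteq> 0" and "b \<noteq> 0" and orbit: "billiard_3_orbit a b P1 P2 P3"
  obtains \<kappa> where "\<kappa> > 0" and "\<kappa>\<^sup>2 * (a\<^sup>2 - b\<^sup>2)\<^sup>2 / 4 + 2 * \<kappa> * (a\<^sup>2 + b\<^sup>2) = 12"
    and "inradius P1 P2 P3 / (2 * circumradius P1 P2 P3) = a\<^sup>2 * b\<^sup>2 * \<kappa>\<^sup>2 / (24 + 2 * \<kappa> * (a\<^sup>2 + b\<^sup>2))"
proof -
  define z1 z2 z3 where "z1 = eccentric_point a b P1" and "z2 = eccentric_point a b P2"
    and "z3 = eccentric_point a b P3"
  have nc: "\<not> collinear {P1, P2, P3}"
    and on: "P1 \<in> ellipse a b" "P2 \<in> ellipse a b" "P3 \<in> ellipse a b"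
    using orbit by (simp_all add: billiard_3_orbit_def)
  have unit: "norm z1 = 1" "norm z2 = 1" "norm z3 = 1"
    using on by (simp_all add: z1_def z2_def z3_def ellipse_iff_norm_eccentric_point)
  have distinct: "z1 \<noteq> z2" "z2 \<noteq> z3" "z3 \<noteq> z1"
    using not_collinear_imp_distinct[OF nc] eccentric_point_eq_iff[OF assms(1,2)]
    by (simp_all add: z1_def z2_def z3_def)
  obtain k where "k > 0" and chords: "(dist z1 z2)\<^sup>2 = k * dist P1 P2"
    "(dist z2 z3)\<^sup>2 = k * dist P2 P3" "(dist z3 z1)\<^sup>2 = k * dist P3 P1"
    using billiard_3_orbit_chords_proportional[OF assms] unfolding z1_def z2_def z3_def by blast
  define \<kappa> where "\<kappa> = k\<^sup>2"
  define \<mu> \<alpha> where "\<mu> = \<kappa> * (a\<^sup>2 - b\<^sup>2) / 2" and "\<alpha> = 2 - \<kappa> * (a\<^sup>2 + b\<^sup>2) / 2"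
  have relation: "2 * Re (z * cnj w) - \<mu> * Re (z * w) = \<alpha>"
    if "norm z = 1" "norm w = 1" "z \<noteq> w"
      "(dist z w)\<^sup>2 = k * sqrt (a\<^sup>2 * (Re (z - w))\<^sup>2 + b\<^sup>2 * (Im (z - w))\<^sup>2)" for z w
    using chord_relation[OF that] by (simp add: \<mu>_def \<alpha>_def \<kappa>_def)
  note chords' = chords[unfolded dist_eq_eccentric_point[OF assms(1,2)], folded z1_def z2_def z3_def]
  note triangle = unit_triangle_chord_relations[OF unit distinct relation[OF unit(1,2) distinct(1) chords'(1)]
      relation[OF unit(2,3) distinct(2) chords'(2)] relation[OF unit(3,1) distinct(3) chords'(3)]]
  show thesis
  proof (rule that)
    show "\<kappa> > 0"
      using \<open>k > 0\<close> by (simp add: \<kappa>_def)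
    have "\<mu>\<^sup>2 = \<kappa>\<^sup>2 * (a\<^sup>2 - b\<^sup>2)\<^sup>2 / 4"
      by (simp add: \<mu>_def power_mult_distrib power_divide)
    moreover have "12 = 4 + 4 * \<alpha> + 2 * \<kappa> * (a\<^sup>2 + b\<^sup>2)"
      by (simp add: \<alpha>_def field_simps)
    ultimately show "\<kappa>\<^sup>2 * (a\<^sup>2 - b\<^sup>2)\<^sup>2 / 4 + 2 * \<kappa> * (a\<^sup>2 + b\<^sup>2) = 12"
      using triangle(1) by linarith
    have "inradius P1 P2 P3 / (2 * circumradius P1 P2 P3)
        = a\<^sup>2 * b\<^sup>2 * k ^ 4 / (4 * ((dist z1 z2)\<^sup>2 + (dist z2 z3)\<^sup>2 + (dist z3 z1)\<^sup>2))"
      using inradius_div_circumradius_eccentric[OF assms(1,2) nc on \<open>k > 0\<close> chords[unfolded z1_def z2_def z3_def]]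
      by (simp add: z1_def z2_def z3_def)
    also have "4 * ((dist z1 z2)\<^sup>2 + (dist z2 z3)\<^sup>2 + (dist z3 z1)\<^sup>2) = 24 + 2 * \<kappa> * (a\<^sup>2 + b\<^sup>2)"
      unfolding triangle(2) by (simp add: \<alpha>_def field_simps)
    also have "k ^ 4 = \<kappa>\<^sup>2"
      by (simp add: \<kappa>_def power2_eq_square power4_eq_xxxx)
    finally show "inradius P1 P2 P3 / (2 * circumradius P1 P2 P3) = a\<^sup>2 * b\<^sup>2 * \<kappa>\<^sup>2 / (24 + 2 * \<kappa> * (a\<^sup>2 + b\<^sup>2))" .
  qed
qed

section \<open>The caustic\<close>

lemma caustic_radicand_bounds:
  fixes a b :: real
  assumes "a > b" and "b > 0"
  shows "(a\<^sup>2 + b\<^sup>2) / 2 < sqrt (a ^ 4 - a\<^sup>2 * b\<^sup>2 + b ^ 4)"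
    and "sqrt (a ^ 4 - a\<^sup>2 * b\<^sup>2 + b ^ 4) < a\<^sup>2"
proof -
  have "b\<^sup>2 < a\<^sup>2"
    using assms by (simp add: power_strict_mono)
  have "a ^ 4 - a\<^sup>2 * b\<^sup>2 + b ^ 4 - ((a\<^sup>2 + b\<^sup>2) / 2)\<^sup>2 = 3 / 4 * (a\<^sup>2 - b\<^sup>2)\<^sup>2"
    by (simp add: power2_eq_square power4_eq_xxxx field_simps)
  moreover have "3 / 4 * (a\<^sup>2 - b\<^sup>2)\<^sup>2 > 0"
    using \<open>b\<^sup>2 < a\<^sup>2\<close> by simp
  ultimately show "(a\<^sup>2 + b\<^sup>2) / 2 < sqrt (a ^ 4 - a\<^sup>2 * b\<^sup>2 + b ^ 4)"
    by (intro real_less_rsqrt) linarith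
  have "(a\<^sup>2)\<^sup>2 - (a ^ 4 - a\<^sup>2 * b\<^sup>2 + b ^ 4) = b\<^sup>2 * (a\<^sup>2 - b\<^sup>2)"
    by (simp add: power2_eq_square power4_eq_xxxx algebra_simps)
  moreover have "b\<^sup>2 * (a\<^sup>2 - b\<^sup>2) > 0"
    using \<open>b\<^sup>2 < a\<^sup>2\<close> assms(2) by simp
  ultimately show "sqrt (a ^ 4 - a\<^sup>2 * b\<^sup>2 + b ^ 4) < a\<^sup>2"
    by (intro real_less_lsqrt) simp_all
qed

lemma caustic_ratio_of_root:
  fixes a b \<kappa> :: real
  assumes "a > b" and "b > 0" and "\<kappa> > 0"
    and root: "\<kappa>\<^sup>2 * (a\<^sup>2 - b\<^sup>2)\<^sup>2 / 4 + 2 * \<kappa> * (a\<^sup>2 + b\<^sup>2) = 12"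
  defines "\<delta> \<equiv> sqrt (a ^ 4 - a\<^sup>2 * b\<^sup>2 + b ^ 4)"
  shows "a\<^sup>2 * b\<^sup>2 * \<kappa>\<^sup>2 / (24 + 2 * \<kappa> * (a\<^sup>2 + b\<^sup>2)) = (\<delta> - b\<^sup>2) * (a\<^sup>2 - \<delta>) / (a\<^sup>2 - b\<^sup>2)\<^sup>2"
proof -
  define A B where "A = (a\<^sup>2 + b\<^sup>2) / 2" and "B = (a\<^sup>2 - b\<^sup>2) / 2"
  have a2: "a\<^sup>2 = A + B" and b2: "b\<^sup>2 = A - B"
    by (simp_all add: A_def B_def field_simps)
  have "b\<^sup>2 < a\<^sup>2" and "b\<^sup>2 > 0"
    using assms by (simp_all add: power_strict_mono)
  then have "B > 0" and "A > 0"
    unfolding a2 b2 by simp_all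
  have "\<delta> > A"
    using caustic_radicand_bounds[OF assms(1,2)] by (simp add: \<delta>_def A_def)
  then have "\<delta> \<ge> 0"
    using \<open>A > 0\<close> by simp
  have "a ^ 4 - a\<^sup>2 * b\<^sup>2 + b ^ 4 = (a\<^sup>2)\<^sup>2 - a\<^sup>2 * b\<^sup>2 + (b\<^sup>2)\<^sup>2"
    by simp
  also have "\<dots> = A\<^sup>2 + 3 * B\<^sup>2"
    unfolding a2 b2 by (simp add: power2_eq_square algebra_simps)
  finally have \<delta>_sq: "\<delta>\<^sup>2 = A\<^sup>2 + 3 * B\<^sup>2"
    by (simp add: \<delta>_def)
  have root': "B\<^sup>2 * \<kappa>\<^sup>2 + 4 * A * \<kappa> = 12"
    using root unfolding a2 b2 by (simp add: power2_eq_square algebra_simps)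
  \<comment> \<open>\<open>\<kappa>\<close> is the positive root of \<open>B\<^sup>2 \<kappa>\<^sup>2 + 4 A \<kappa> - 12\<close>\<close>
  have "(B\<^sup>2 * \<kappa> + 2 * A)\<^sup>2 - (2 * \<delta>)\<^sup>2
      = B\<^sup>2 * (B\<^sup>2 * \<kappa>\<^sup>2 + 4 * A * \<kappa> - 12) - 4 * (\<delta>\<^sup>2 - A\<^sup>2 - 3 * B\<^sup>2)"
    by (simp add: power2_eq_square algebra_simps)
  then have "(B\<^sup>2 * \<kappa> + 2 * A)\<^sup>2 = (2 * \<delta>)\<^sup>2"
    using root' \<delta>_sq by simp
  then have \<kappa>: "B\<^sup>2 * \<kappa> + 2 * A = 2 * \<delta>"
    by (rule power2_eq_imp_eq) (use \<open>\<kappa> > 0\<close> \<open>A > 0\<close> \<open>\<delta> \<ge> 0\<close> in simp_all)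
  have "(A + B) * (A - B) * \<kappa>\<^sup>2 * (2 * B)\<^sup>2 - (\<delta> - (A - B)) * (A + B - \<delta>) * (24 + 4 * \<kappa> * A)
      = (B\<^sup>2 * \<kappa> + 2 * A - 2 * \<delta>) * (4 * \<kappa> * (A\<^sup>2 - B\<^sup>2) + 8 * (2 * A - \<delta>))
        + (\<delta>\<^sup>2 - A\<^sup>2 - 3 * B\<^sup>2) * (4 * \<kappa> * A + 8)"
    by (simp add: power2_eq_square algebra_simps)
  then have "(A + B) * (A - B) * \<kappa>\<^sup>2 * (2 * B)\<^sup>2 = (\<delta> - (A - B)) * (A + B - \<delta>) * (24 + 4 * \<kappa> * A)"
    using \<kappa> \<delta>_sq by simp
  moreover have "24 + 4 * \<kappa> * A > 0"
    using \<open>\<kappa> > 0\<close> \<open>A > 0\<close> by (simp add: add_pos_pos)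
  ultimately show ?thesis
    using \<open>B > 0\<close> unfolding a2 b2 by (simp add: frac_eq_eq)
qed

theorem theorem3:
  fixes a b c \<delta> a_c b_c :: real and P1 P2 P3 :: "real \<times> real"
  assumes "a > b" and "b > 0"
    and "c\<^sup>2 = a\<^sup>2 - b\<^sup>2"
    and "\<delta> = sqrt (a ^ 4 - a\<^sup>2 * b\<^sup>2 + b ^ 4)"
    and "a_c = a * (\<delta> - b\<^sup>2) / c\<^sup>2"
    and "b_c = b * (a\<^sup>2 - \<delta>) / c\<^sup>2"
    and "billiard_3_orbit a b P1 P2 P3"
  shows "measure lborel (ellipse_region a_c b_c) / measure lborel (ellipse_region a b)
         = inradius P1 P2 P3 / (2 * circumradius P1 P2 P3)"
proof -
  have "a > 0" and "c\<^sup>2 > 0"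
    using assms(1-3) by (simp_all add: power_strict_mono)
  have "b\<^sup>2 < \<delta>" and "\<delta> < a\<^sup>2"
    using caustic_radicand_bounds[OF assms(1,2)] assms(1-4) by (simp_all add: power_strict_mono)
  then have "a_c > 0" and "b_c > 0"
    using \<open>a > 0\<close> \<open>b > 0\<close> \<open>c\<^sup>2 > 0\<close> by (simp_all add: assms(5,6))
  obtain \<kappa> where "\<kappa> > 0" and root: "\<kappa>\<^sup>2 * (a\<^sup>2 - b\<^sup>2)\<^sup>2 / 4 + 2 * \<kappa> * (a\<^sup>2 + b\<^sup>2) = 12"
    and ratio: "inradius P1 P2 P3 / (2 * circumradius P1 P2 P3) = a\<^sup>2 * b\<^sup>2 * \<kappa>\<^sup>2 / (24 + 2 * \<kappa> * (a\<^sup>2 + b\<^sup>2))"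
    using billiard_3_orbit_inradius_div_circumradius[OF _ _ assms(7)] \<open>a > 0\<close> \<open>b > 0\<close> by auto
  have "measure lborel (ellipse_region a_c b_c) / measure lborel (ellipse_region a b) = a_c * b_c / (a * b)"
    using \<open>a_c > 0\<close> \<open>b_c > 0\<close> \<open>a > 0\<close> \<open>b > 0\<close> by (simp add: measure_ellipse_region)
  also have "\<dots> = (\<delta> - b\<^sup>2) * (a\<^sup>2 - \<delta>) / (c\<^sup>2 * c\<^sup>2)"
    unfolding assms(5,6) using \<open>a > 0\<close> \<open>b > 0\<close> by simp
  also have "\<dots> = (\<delta> - b\<^sup>2) * (a\<^sup>2 - \<delta>) / (a\<^sup>2 - b\<^sup>2)\<^sup>2"
    by (simp only: assms(3) power2_eq_square[symmetric])
  also have "\<dots> = inradius P1 P2 P3 / (2 * circumradius P1 P2 P3)"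
    using caustic_ratio_of_root[OF assms(1,2) \<open>\<kappa> > 0\<close> root] by (simp add: ratio assms(4))
  finally show ?thesis .
qed

end
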